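(* For every $n\ge 1$, the Poincar\'e series of $\mathrm{Kh}_{alg}(n,\infty;\mathbb{Z}/2)$ is $$P_{n}(q,t;\mathbb{Z}/2)=\prod_{i=0}^{n-1}\frac{1+q^{2i+4}t^{2i+1}}{1-q^{2i+2}t^{2i}}\ \prod_{i=0}^{\lfloor\frac{n-1}{2}\rfloor}\frac{1-q^{4i+4}t^{4i}}{1+q^{4i+4}t^{4i+1}}.$$
   Context: For a commutative ring $R$ and $n\ge1$, let $A_n(R)=R[x_0,\dots,x_{n-1}]\otimes_R\Lambda_R[\xi_0,\dots,\xi_{n-1}]$ be the free graded-commutative $R$-algebra on even generators $x_k$ and odd generators $\xi_k$ (odd generators anticommute and square to zero). It is bigraded by declaring $x_k$ to have $q$-degree $2k+2$ and $t$-degree $2k$, and $\xi_k$ to have $q$-degree $2k+4$ and $t$-degree $2k+1$. Let $d_2$ be the unique $R$-linear odd derivation (i.e. $d_2(ab)=d_2(a)b+(-1)^{|a|}a\,d_2(b)$, where $|a|$ is the number of $\xi$'s mod 2) with $d_2(x_k)=0$ and $d_2(\xi_k)=\sum_{i=0}^{k}x_ix_{k-i}$. Then $d_2^2=0$, $d_2$ preserves $q$-degree and lowers $t$-degree by 1. $\mathrm{Kh}_{alg}(n,\infty;R)$ denotes the homology $H(A_n(R),d_2)$, a bigraded $R$-algebra. For a field $F$ the Poincar\'e series is $\sum_{a,b}\dim_F \mathrm{Kh}_{alg}(n,\infty;F)^{a,b}\,q^a t^b$, where $a$ is the $q$-degree and $b$ the $t$-degree. *)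

theory Defs
  imports "HOL-Library.Z2" "HOL-Library.Function_Algebras" "HOL-Computational_Algebra.Formal_Power_Series"
begin

text \<open>Basis monomials of A_n(R): a monomial x^e xi_S is a pair (e, S), where
  e k is the exponent of x_k and S is the set of indices of the odd generators
  present (written in increasing order xi_{s1} ... xi_{sm}, s1 < ... < sm).\<close>

type_synonym mono = "(nat \<Rightarrow> nat) \<times> nat set"

definition valid_mono :: "nat \<Rightarrow> mono \<Rightarrow> bool" where
  "valid_mono n m \<longleftrightarrow> (\<forall>k\<ge>n. fst m k = 0) \<and> snd m \<subseteq> {..<n}"

definition qdeg :: "nat \<Rightarrow> mono \<Rightarrow> nat" where
  "qdeg n m = (\<Sum>k<n. fst m k * (2*k+2)) + (\<Sum>k\<in>snd m. 2*k+4)"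

definition tdeg :: "nat \<Rightarrow> mono \<Rightarrow> nat" where
  "tdeg n m = (\<Sum>k<n. fst m k * (2*k)) + (\<Sum>k\<in>snd m. 2*k+1)"

definition basis_bideg :: "nat \<Rightarrow> nat \<Rightarrow> nat \<Rightarrow> mono set" where
  "basis_bideg n a b = {m. valid_mono n m \<and> qdeg n m = a \<and> tdeg n m = b}"

text \<open>Elements of A_n(R) of bidegree (a,b): R-linear combinations (coefficient
  functions) supported on the basis monomials of that bidegree.\<close>

definition chains :: "nat \<Rightarrow> nat \<Rightarrow> nat \<Rightarrow> (mono \<Rightarrow> 'r::zero) set" where
  "chains n a b = {v. \<forall>m. v m \<noteq> 0 \<longrightarrow> m \<in> basis_bideg n a b}"

text \<open>Matrix coefficient of d_2 from basis monomial (e,S) to basis monomial (e',S'):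
  the odd derivation with d_2 x_k = 0, d_2 xi_k = sum_{i=0}^k x_i x_{k-i} sends
  x^e xi_{s1}...xi_{sm} to sum_j (-1)^(j-1) x^e (sum_i x_i x_{s_j - i}) xi_{s1}..(omit s_j)..xi_{sm}.\<close>

definition d2_coeff :: "mono \<Rightarrow> mono \<Rightarrow> 'r::comm_ring_1" where
  "d2_coeff m m' =
     (\<Sum>k\<in>snd m. if snd m' = snd m - {k} then
        (-1) ^ card {j\<in>snd m. j < k} *
        of_nat (card {i. i \<le> k \<and> fst m' =
           (\<lambda>j. fst m j + (if j = i then 1 else 0) + (if j = k - i then 1 else 0))})
      else 0)"

definition d2 :: "(mono \<Rightarrow> 'r::comm_ring_1) \<Rightarrow> mono \<Rightarrow> 'r" where
  "d2 v m' = (\<Sum>m\<in>{m. v m \<noteq> 0}. v m * d2_coeff m m')"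

definition fscale :: "'f \<Rightarrow> (mono \<Rightarrow> 'f) \<Rightarrow> mono \<Rightarrow> 'f::field" where
  "fscale c v = (\<lambda>m. c * v m)"

definition kh_dim :: "'f::field itself \<Rightarrow> nat \<Rightarrow> nat \<Rightarrow> nat \<Rightarrow> nat" where
  "kh_dim _ n a b =
     vector_space.dim (fscale :: 'f \<Rightarrow> _) {v \<in> chains n a b. d2 v = (\<lambda>_. 0)}
     - vector_space.dim (fscale :: 'f \<Rightarrow> _) (d2 ` (chains n a (b+1) :: (mono \<Rightarrow> 'f) set))"

text \<open>Poincare series as a two-variable formal power series: outer variable q,
  inner variable t; coefficient of q^a t^b is dim Kh^{a,b}.\<close>

definition poincare :: "'f::field itself \<Rightarrow> nat \<Rightarrow> rat fps fps" where
  "poincare F n = Abs_fps (\<lambda>a. Abs_fps (\<lambda>b. of_nat (kh_dim F n a b)))"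

abbreviation qvar :: "rat fps fps" where "qvar \<equiv> fps_X"
abbreviation tvar :: "rat fps fps" where "tvar \<equiv> fps_const fps_X"

end

theory Submission
  imports Defs
begin

(* Over Z/2 the terms x_i x_(k-i) and x_(k-i) x_i of d2(xi_k) cancel in pairs, so d2(xi_k) is
   x_(k/2)^2 for even k and 0 for odd k: d2 only couples the pairs (x_j, xi_(2j)), 2j < n, on
   which it is the Koszul differential xi_(2j) -> x_j^2.  On a basis monomial m, d2 m is the sum
   of the monomials obtained by trading one xi_(2j) for x_j^2.

   1. This combinatorial differential dZ2, a homotopy hZ2 acting at the smallest "active" pair,
      and the projection projZ2 onto "critical" monomials (no xi_(2j), and x_j to a power at
      most 1, whenever 2j < n) satisfy dZ2 hZ2 + hZ2 dZ2 + projZ2 = id.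
   2. d2 over Z/2 coincides with dZ2 (lemma d2_eq_dZ2).
   3. Linear algebra turns the homotopy into dim Kh^(a,b) = #critical monomials of bidegree
      (a,b) (theorem kh_dim_eq_card_critical).
   4. The generating series of critical monomials is a product of one local factor per
      generator pair, which rearranges into the stated closed form. *)

lemma bit_add_self [simp]: "(x::bit) + x = 0"
  by (metis bit_2_eq_0 mult_2 mult_zero_left)

text \<open>A symmetric function summed over ordered pairs of distinct elements vanishes mod 2,
  because every unordered pair is counted twice.\<close>

lemma sum_distinct_pairs_bit:
  assumes "finite R" "\<And>j k. f j k = f k j"
  shows "(\<Sum>j\<in>R. \<Sum>k\<in>R - {j}. f j k) = (0::bit)"
  using assms(1)
proof (induction R rule: finite_induct)
  case empty then show ?case by simp
next
  case (insert a R)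
  have "(\<Sum>j\<in>insert a R. \<Sum>k\<in>insert a R - {j}. f j k)
      = (\<Sum>k\<in>R. f a k) + (\<Sum>j\<in>R. \<Sum>k\<in>insert a (R - {j}). f j k)"
  proof -
    have "insert a R - {a} = R" using insert by auto
    moreover have "\<And>j. j \<in> R \<Longrightarrow> insert a R - {j} = insert a (R - {j})" using insert by auto
    ultimately show ?thesis using insert by (simp add: sum.insert)
  qed
  also have "(\<Sum>j\<in>R. \<Sum>k\<in>insert a (R - {j}). f j k) = (\<Sum>j\<in>R. f j a + (\<Sum>k\<in>R - {j}. f j k))"
    using insert by (intro sum.cong) (auto simp: sum.insert)
  also have "\<dots> = (\<Sum>j\<in>R. f j a) + (\<Sum>j\<in>R. \<Sum>k\<in>R - {j}. f j k)"
    by (rule sum.distrib)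
  also have "(\<Sum>j\<in>R. f j a) = (\<Sum>j\<in>R. f a j)"
    using assms(2) by simp
  also have "(\<Sum>j\<in>R. \<Sum>k\<in>R - {j}. f j k) = 0" by (rule insert.IH)
  finally show ?case by (simp only: add_0_right bit_add_self)
qed

lemma sum_indicator_unique_bit:
  assumes "finite S" "\<And>k k'. k \<in> S \<Longrightarrow> k' \<in> S \<Longrightarrow> P k \<Longrightarrow> P k' \<Longrightarrow> k = k'"
  shows "(\<Sum>k\<in>S. if P k then (1::bit) else 0) = (if \<exists>k\<in>S. P k then 1 else 0)"
proof (cases "\<exists>k\<in>S. P k")
  case True
  then obtain k0 where k0: "k0 \<in> S" "P k0" by blast
  have "(\<Sum>k\<in>S. if P k then (1::bit) else 0) = (\<Sum>k\<in>S. if k = k0 then 1 else 0)"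
    using assms(2) k0 by (intro sum.cong) auto
  also have "\<dots> = 1" using k0 assms(1) by simp
  finally show ?thesis using True by simp
qed auto

section \<open>Trading an odd generator for a square\<close>

text \<open>For a basis monomial m, \<open>xi_of_sq j m\<close> replaces x_j^2 by xi_(2j) and
  \<open>sq_of_xi j m\<close> replaces xi_(2j) by x_j^2.  Over Z/2, d2 is the sum of all moves
  \<open>sq_of_xi\<close>.\<close>

definition xi_of_sq :: "nat \<Rightarrow> mono \<Rightarrow> mono" where
  "xi_of_sq j m = ((fst m)(j := fst m j - 2), insert (2*j) (snd m))"

definition sq_of_xi :: "nat \<Rightarrow> mono \<Rightarrow> mono" where
  "sq_of_xi j m = ((fst m)(j := fst m j + 2), snd m - {2*j})"

text \<open>The pair indices j (with 2j < n) at which m arises from a move \<open>sq_of_xi j\<close>: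
  x_j^2 divides m and xi_(2j) does not.\<close>

definition sq_slots :: "nat \<Rightarrow> mono \<Rightarrow> nat set" where
  "sq_slots n m = {j. 2*j < n \<and> 2*j \<notin> snd m \<and> 2 \<le> fst m j}"

definition active :: "nat \<Rightarrow> mono \<Rightarrow> nat set" where
  "active n m = {j. 2*j < n \<and> (2*j \<in> snd m \<or> 2 \<le> fst m j)}"

definition critical :: "nat \<Rightarrow> mono \<Rightarrow> bool" where
  "critical n m \<longleftrightarrow> active n m = {}"

definition pivot :: "nat \<Rightarrow> mono \<Rightarrow> nat" where
  "pivot n m = Min (active n m)"

text \<open>Monomials whose pivot pair carries the odd generator; the homotopy below takes values
  in their span.\<close>

definition pivot_xi :: "nat \<Rightarrow> mono \<Rightarrow> bool" where
  "pivot_xi n m \<longleftrightarrow> active n m \<noteq> {} \<and> 2 * pivot n m \<in> snd m"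

lemma finite_active [simp]: "finite (active n m)"
  by (rule finite_subset[of _ "{..<n}"]) (auto simp: active_def)

lemma finite_sq_slots [simp]: "finite (sq_slots n m)"
  by (rule finite_subset[of _ "{..<n}"]) (auto simp: sq_slots_def)

lemma sq_slots_subset_active: "sq_slots n m \<subseteq> active n m"
  by (auto simp: sq_slots_def active_def)

lemma active_xi_of_sq: "j \<in> sq_slots n m \<Longrightarrow> active n (xi_of_sq j m) = active n m"
  by (auto simp: active_def sq_slots_def xi_of_sq_def)

lemma active_sq_of_xi: "2*j \<in> snd m \<Longrightarrow> active n (sq_of_xi j m) = active n m"
  by (auto simp: active_def sq_of_xi_def)

lemma pivot_in_active: "active n m \<noteq> {} \<Longrightarrow> pivot n m \<in> active n m"
  by (simp add: pivot_def)

lemma xi_of_sq_sq_of_xi: "2*j \<in> snd m \<Longrightarrow> xi_of_sq j (sq_of_xi j m) = m"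
  by (cases m) (auto simp: xi_of_sq_def sq_of_xi_def)

lemma sq_of_xi_xi_of_sq: "2 \<le> fst m j \<Longrightarrow> 2*j \<notin> snd m \<Longrightarrow> sq_of_xi j (xi_of_sq j m) = m"
  by (cases m) (auto simp: xi_of_sq_def sq_of_xi_def fun_eq_iff)

lemma xi_of_sq_sq_of_xi_commute: "j \<noteq> k \<Longrightarrow> xi_of_sq j (sq_of_xi k m) = sq_of_xi k (xi_of_sq j m)"
  by (cases m) (auto simp: xi_of_sq_def sq_of_xi_def fun_upd_twist)

lemma xi_of_sq_commute: "j \<noteq> k \<Longrightarrow> xi_of_sq j (xi_of_sq k m) = xi_of_sq k (xi_of_sq j m)"
  by (cases m) (auto simp: xi_of_sq_def fun_upd_twist)

lemma sq_slots_xi_of_sq: "j \<in> sq_slots n m \<Longrightarrow> sq_slots n (xi_of_sq j m) = sq_slots n m - {j}"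
  by (auto simp: sq_slots_def xi_of_sq_def)

lemma sq_slots_sq_of_xi:
  "2*j \<in> snd m \<Longrightarrow> 2*j < n \<Longrightarrow> sq_slots n (sq_of_xi j m) = insert j (sq_slots n m)"
  by (auto simp: sq_slots_def sq_of_xi_def)

section \<open>The differential, the homotopy and the projection\<close>

definition dZ2 :: "nat \<Rightarrow> (mono \<Rightarrow> bit) \<Rightarrow> mono \<Rightarrow> bit" where
  "dZ2 n v m = (\<Sum>j\<in>sq_slots n m. v (xi_of_sq j m))"

definition hZ2 :: "nat \<Rightarrow> (mono \<Rightarrow> bit) \<Rightarrow> mono \<Rightarrow> bit" where
  "hZ2 n v m = (if pivot_xi n m then v (sq_of_xi (pivot n m) m) else 0)"

definition projZ2 :: "nat \<Rightarrow> (mono \<Rightarrow> bit) \<Rightarrow> mono \<Rightarrow> bit" where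
  "projZ2 n v m = (if critical n m then v m else 0)"

text \<open>The homotopy formula at a monomial with xi at its pivot pair: \<open>hZ2 dZ2\<close> returns v m
  plus the terms of \<open>dZ2 hZ2\<close>, which cancel mod 2.\<close>

lemma homotopy_at_pivot_xi:
  assumes "pivot_xi n m"
  shows "dZ2 n (hZ2 n v) m + hZ2 n (dZ2 n v) m = v m"
proof -
  define j0 where "j0 = pivot n m"
  define p where "p = sq_of_xi j0 m"
  have act: "active n m \<noteq> {}" and xi: "2*j0 \<in> snd m"
    using assms by (simp_all add: pivot_xi_def j0_def)
  have j0n: "2*j0 < n" using pivot_in_active[OF act] by (simp add: active_def j0_def)
  have j0_slot: "j0 \<notin> sq_slots n m" using xi by (simp add: sq_slots_def)
  have "hZ2 n (dZ2 n v) m = dZ2 n v p" using assms by (simp add: hZ2_def p_def j0_def)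
  also have "\<dots> = v (xi_of_sq j0 p) + (\<Sum>j\<in>sq_slots n m. v (xi_of_sq j p))"
    using sq_slots_sq_of_xi[OF xi j0n] j0_slot by (simp add: dZ2_def p_def)
  also have "xi_of_sq j0 p = m" using xi_of_sq_sq_of_xi[OF xi] by (simp add: p_def)
  finally have hd: "hZ2 n (dZ2 n v) m = v m + (\<Sum>j\<in>sq_slots n m. v (xi_of_sq j p))" .
  have dh: "dZ2 n (hZ2 n v) m = (\<Sum>j\<in>sq_slots n m. v (xi_of_sq j p))"
    unfolding dZ2_def
  proof (rule sum.cong[OF refl])
    fix j assume j: "j \<in> sq_slots n m"
    have ne: "j \<noteq> j0" using j j0_slot by auto
    have piv: "pivot n (xi_of_sq j m) = j0"
      by (simp add: pivot_def active_xi_of_sq[OF j] j0_def)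
    have "pivot_xi n (xi_of_sq j m)"
      unfolding pivot_xi_def active_xi_of_sq[OF j] piv using act xi by (simp add: xi_of_sq_def)
    then show "hZ2 n v (xi_of_sq j m) = v (xi_of_sq j p)"
      by (simp add: hZ2_def piv p_def xi_of_sq_sq_of_xi_commute[OF ne])
  qed
  show ?thesis unfolding hd dh
    by (simp only: add.left_commute[of "\<Sum>j\<in>sq_slots n m. v (xi_of_sq j p)"] bit_add_self add_0_right)
qed

text \<open>The homotopy formula at a non-critical monomial whose pivot pair carries x_j^2 but no xi:
  only the move at the pivot contributes to \<open>dZ2 hZ2\<close>.\<close>

lemma homotopy_at_pivot_sq:
  assumes act: "active n m \<noteq> {}" and no_xi: "\<not> pivot_xi n m"
  shows "dZ2 n (hZ2 n v) m + hZ2 n (dZ2 n v) m = v m"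
proof -
  define j0 where "j0 = pivot n m"
  have j0_slot: "j0 \<in> sq_slots n m"
    using pivot_in_active[OF act] no_xi act by (auto simp: active_def sq_slots_def pivot_xi_def j0_def)
  have "dZ2 n (hZ2 n v) m = (\<Sum>j\<in>sq_slots n m. if j = j0 then v m else 0)"
    unfolding dZ2_def
  proof (rule sum.cong[OF refl])
    fix j assume j: "j \<in> sq_slots n m"
    have piv: "pivot n (xi_of_sq j m) = j0" by (simp add: pivot_def active_xi_of_sq[OF j] j0_def)
    have "pivot_xi n (xi_of_sq j m) \<longleftrightarrow> j = j0"
      unfolding pivot_xi_def active_xi_of_sq[OF j] piv
      using act no_xi by (auto simp: pivot_xi_def xi_of_sq_def j0_def)
    moreover have "sq_of_xi j0 (xi_of_sq j0 m) = m"
      using j0_slot by (intro sq_of_xi_xi_of_sq) (auto simp: sq_slots_def)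
    ultimately show "hZ2 n v (xi_of_sq j m) = (if j = j0 then v m else 0)"
      unfolding hZ2_def piv by auto
  qed
  also have "\<dots> = v m" using j0_slot by simp
  finally show ?thesis using no_xi by (simp add: hZ2_def)
qed

lemma homotopy_formula: "dZ2 n (hZ2 n v) m + hZ2 n (dZ2 n v) m + projZ2 n v m = v m"
proof (cases "critical n m")
  case True
  then have "sq_slots n m = {}" "\<not> pivot_xi n m"
    using sq_slots_subset_active[of n m] by (auto simp: critical_def pivot_xi_def)
  then show ?thesis using True by (simp add: dZ2_def hZ2_def projZ2_def)
next
  case False
  then have act: "active n m \<noteq> {}" by (simp add: critical_def)
  then have "dZ2 n (hZ2 n v) m + hZ2 n (dZ2 n v) m = v m"
    using homotopy_at_pivot_xi homotopy_at_pivot_sq by blast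
  then show ?thesis using False by (simp add: projZ2_def)
qed

lemma dZ2_dZ2: "dZ2 n (dZ2 n v) m = 0"
proof -
  have "dZ2 n (dZ2 n v) m = (\<Sum>j\<in>sq_slots n m. \<Sum>k\<in>sq_slots n m - {j}. v (xi_of_sq k (xi_of_sq j m)))"
    unfolding dZ2_def by (intro sum.cong refl) (simp only: sq_slots_xi_of_sq)
  also have "\<dots> = 0"
    by (rule sum_distinct_pairs_bit) (simp_all, metis xi_of_sq_commute)
  finally show ?thesis .
qed

lemma projZ2_dZ2: "projZ2 n (dZ2 n v) m = 0"
  using sq_slots_subset_active[of n m] by (auto simp: projZ2_def dZ2_def critical_def)

lemma dZ2_projZ2: "dZ2 n (projZ2 n v) m = 0"
proof -
  have "\<And>j. j \<in> sq_slots n m \<Longrightarrow> \<not> critical n (xi_of_sq j m)"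
    using sq_slots_subset_active by (fastforce simp: critical_def active_xi_of_sq)
  then show ?thesis by (simp add: dZ2_def projZ2_def)
qed

section \<open>The differential d2 over Z/2\<close>

definition times_pair :: "(nat \<Rightarrow> nat) \<Rightarrow> nat \<Rightarrow> nat \<Rightarrow> nat \<Rightarrow> nat" where
  "times_pair e k i = (\<lambda>j. e j + (if j = i then 1 else 0) + (if j = k - i then 1 else 0))"

lemma times_pair_solutions:
  assumes "i \<le> k"
  shows "{i'. i' \<le> k \<and> times_pair e k i = times_pair e k i'} = {i, k - i}"
proof
  show "{i'. i' \<le> k \<and> times_pair e k i = times_pair e k i'} \<subseteq> {i, k - i}"
  proof
    fix i' assume "i' \<in> {i'. i' \<le> k \<and> times_pair e k i = times_pair e k i'}"
    then have "times_pair e k i' i' = times_pair e k i i'" by simp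
    then show "i' \<in> {i, k - i}" by (auto simp: times_pair_def split: if_splits)
  qed
  show "{i, k - i} \<subseteq> {i'. i' \<le> k \<and> times_pair e k i = times_pair e k i'}"
    using assms by (auto simp: times_pair_def fun_eq_iff)
qed

lemma times_pair_square:
  assumes "even k"
  shows "times_pair e k (k div 2) = e(k div 2 := e (k div 2) + 2)"
proof -
  have "k - k div 2 = k div 2" using assms by presburger
  then show ?thesis by (simp add: times_pair_def fun_eq_iff)
qed

text \<open>Mod 2, the number of ways of writing x^e' = x^e x_i x_(k-i) (with 0 \<le> i \<le> k) is odd
  exactly when k is even and e' = e + 2 e_(k/2): the solutions i and k - i pair up
  unless they coincide.\<close>

lemma card_square_terms_bit:
  fixes e g :: "nat \<Rightarrow> nat"
  shows "(of_nat (card {i. i \<le> k \<and> g = (\<lambda>j. e j + (if j = i then 1 else 0) + (if j = k - i then 1 else 0))}) :: bit)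
     = (if even k \<and> g = e(k div 2 := e (k div 2) + 2) then 1 else 0)"
proof -
  define T where "T = {i. i \<le> k \<and> g = times_pair e k i}"
  have T: "{i. i \<le> k \<and> g = (\<lambda>j. e j + (if j = i then 1 else 0) + (if j = k - i then 1 else 0))} = T"
    by (simp add: T_def times_pair_def)
  have square: "g = e(k div 2 := e (k div 2) + 2) \<longleftrightarrow> g = times_pair e k (k div 2)" if "even k"
    using times_pair_square[OF that] by simp
  show ?thesis
  proof (cases "\<exists>i. i \<le> k \<and> g = times_pair e k i")
    case True
    then obtain i where i: "i \<le> k" "g = times_pair e k i" by blast
    have TT: "T = {i, k - i}" using times_pair_solutions[OF i(1)] by (simp add: T_def i(2))
    show ?thesis
    proof (cases "i = k - i")
      case True
      then have ev: "even k" "k div 2 = i" using i(1) by presburger+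
      then have "even k \<and> g = e(k div 2 := e (k div 2) + 2)" using square i(2) by simp
      moreover have "card T = 1" unfolding TT using True[symmetric] by simp
      ultimately show ?thesis unfolding T by simp
    next
      case False
      have "\<not> (even k \<and> g = times_pair e k (k div 2))"
      proof
        assume h: "even k \<and> g = times_pair e k (k div 2)"
        then have "k div 2 \<in> T" by (simp add: T_def)
        then have "k div 2 = i \<or> k div 2 = k - i" by (simp add: TT)
        moreover have "even k" using h by simp
        ultimately show False using False i(1) by presburger
      qed
      then have "\<not> (even k \<and> g = e(k div 2 := e (k div 2) + 2))" using square by blast
      moreover have "card T = 2" unfolding TT using False by simp
      ultimately show ?thesis unfolding T by simp
    qed
  next
    case False
    then have "T = {}" by (auto simp: T_def)
    moreover have "k div 2 \<le> k" by simp
    then have "\<not> (even k \<and> g = e(k div 2 := e (k div 2) + 2))" using False square by blast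
    ultimately show ?thesis unfolding T by simp
  qed
qed

definition d2_step :: "mono \<Rightarrow> mono \<Rightarrow> bool" where
  "d2_step m m' \<longleftrightarrow> (\<exists>k\<in>snd m. snd m' = snd m - {k} \<and> even k \<and>
      fst m' = (fst m)(k div 2 := fst m (k div 2) + 2))"

lemma d2_coeff_bit:
  assumes "finite (snd m)"
  shows "(d2_coeff m m' :: bit) = (if d2_step m m' then 1 else 0)"
proof -
  have "(d2_coeff m m' :: bit) = (\<Sum>k\<in>snd m. if snd m' = snd m - {k} \<and> even k \<and>
      fst m' = (fst m)(k div 2 := fst m (k div 2) + 2) then 1 else 0)"
    unfolding d2_coeff_def card_square_terms_bit
    by (intro sum.cong refl) (simp add: power_one)
  also have "\<dots> = (if d2_step m m' then 1 else 0)"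
    unfolding d2_step_def by (rule sum_indicator_unique_bit[OF assms]) blast
  finally show ?thesis .
qed

lemma d2_step_xi_of_sq:
  assumes j: "j \<in> sq_slots n m'"
  shows "d2_step (xi_of_sq j m') m'"
proof -
  have j2: "2 \<le> fst m' j" "2*j \<notin> snd m'" using j by (auto simp: sq_slots_def)
  have "fst m' = (fst (xi_of_sq j m'))(2 * j div 2 := fst (xi_of_sq j m') (2 * j div 2) + 2)"
    using j2 by (simp add: fun_eq_iff xi_of_sq_def)
  moreover have "snd m' = snd (xi_of_sq j m') - {2 * j}" using j2 by (auto simp: xi_of_sq_def)
  moreover have "2*j \<in> snd (xi_of_sq j m')" by (simp add: xi_of_sq_def)
  ultimately show ?thesis unfolding d2_step_def by (intro bexI[where x="2*j"]) simp_all
qed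

lemma d2_step_imp_xi_of_sq:
  assumes "valid_mono n m" "d2_step m m'"
  shows "m \<in> (\<lambda>j. xi_of_sq j m') ` sq_slots n m'"
proof -
  obtain k where k: "k \<in> snd m" "even k" "snd m' = snd m - {k}"
    "fst m' = (fst m)(k div 2 := fst m (k div 2) + 2)" using assms(2) by (auto simp: d2_step_def)
  obtain j where kj: "k = 2*j" using k(2) by (rule evenE)
  have "k < n" using assms(1) k(1) by (auto simp: valid_mono_def)
  then have "j \<in> sq_slots n m'" using k kj by (simp add: sq_slots_def)
  moreover have "xi_of_sq j m' = m"
    using k kj by (intro prod_eqI) (auto simp: xi_of_sq_def)
  ultimately show ?thesis by blast
qed

lemma inj_on_xi_of_sq: "inj_on (\<lambda>j. xi_of_sq j m') (sq_slots n m')"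
proof
  fix j j' assume "j \<in> sq_slots n m'" "j' \<in> sq_slots n m'" "xi_of_sq j m' = xi_of_sq j' m'"
  then have "insert (2*j) (snd m') = insert (2*j') (snd m')" "2*j \<notin> snd m'"
    by (auto simp: xi_of_sq_def sq_slots_def)
  then show "j = j'" by auto
qed

lemma d2_eq_dZ2:
  fixes v :: "mono \<Rightarrow> bit"
  assumes fin: "finite {m. v m \<noteq> 0}" and val: "\<And>m. v m \<noteq> 0 \<Longrightarrow> valid_mono n m"
  shows "d2 v = dZ2 n v"
proof
  fix m'
  define S where "S = {m. v m \<noteq> 0}"
  define A where "A = (\<lambda>j. xi_of_sq j m') ` sq_slots n m'"
  have finA: "finite A" by (simp add: A_def)
  have finS: "finite S" unfolding S_def by (rule fin)
  have coeff: "(d2_coeff m m' :: bit) = (if d2_step m m' then 1 else 0)" if "valid_mono n m" for m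
  proof -
    have "snd m \<subseteq> {..<n}" using that by (simp add: valid_mono_def)
    then have "finite (snd m)" by (rule finite_subset) simp
    then show ?thesis by (rule d2_coeff_bit)
  qed
  have "d2 v m' = (\<Sum>m\<in>S. v m * d2_coeff m m')" by (simp only: d2_def S_def)
  also have "\<dots> = (\<Sum>m\<in>S \<union> A. v m * d2_coeff m m')"
    by (rule sum.mono_neutral_left) (use finA finS in \<open>auto simp: S_def\<close>)
  also have "\<dots> = (\<Sum>m\<in>A. v m * d2_coeff m m')"
  proof (rule sum.mono_neutral_right)
    show "\<forall>m\<in>S \<union> A - A. v m * d2_coeff m m' = 0"
    proof
      fix m assume m: "m \<in> S \<union> A - A"
      then have "v m \<noteq> 0" unfolding S_def by blast
      then have vm: "valid_mono n m" by (rule val)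
      have "\<not> d2_step m m'" using m d2_step_imp_xi_of_sq[OF vm] unfolding A_def by blast
      then show "v m * d2_coeff m m' = 0" by (simp add: coeff[OF vm])
    qed
  qed (use finA finS in blast)+
  also have "\<dots> = (\<Sum>m\<in>A. v m)"
  proof (rule sum.cong[OF refl])
    fix m assume m: "m \<in> A"
    show "v m * d2_coeff m m' = v m"
    proof (cases "v m = 0")
      case False
      from m obtain j where "j \<in> sq_slots n m'" "m = xi_of_sq j m'" unfolding A_def by blast
      then have "d2_step m m'" using d2_step_xi_of_sq by simp
      then show ?thesis using coeff[OF val[OF False]] by simp
    qed simp
  qed
  also have "\<dots> = dZ2 n v m'"
    unfolding A_def dZ2_def by (rule sum.reindex[OF inj_on_xi_of_sq, unfolded comp_def])
  finally show "d2 v m' = dZ2 n v m'" .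
qed

lemma sum_fun_upd_add:
  fixes e w :: "nat \<Rightarrow> nat"
  assumes "j < n"
  shows "(\<Sum>k<n. (e(j := e j + c)) k * w k) = (\<Sum>k<n. e k * w k) + c * w j"
proof -
  have "(\<Sum>k<n. (e(j := e j + c)) k * w k) = (\<Sum>k<n. e k * w k + (if k = j then c * w j else 0))"
    by (intro sum.cong) (auto simp: algebra_simps)
  also have "\<dots> = (\<Sum>k<n. e k * w k) + c * w j" using assms by (simp add: sum.distrib)
  finally show ?thesis .
qed

lemma valid_mono_sq_of_xi:
  "2*j \<in> snd m \<Longrightarrow> 2*j < n \<Longrightarrow> valid_mono n (sq_of_xi j m) \<longleftrightarrow> valid_mono n m"
  by (auto simp: valid_mono_def sq_of_xi_def split: if_splits)

text \<open>Trading xi_(2j) for x_j^2 preserves the q-degree and lowers the t-degree by one: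
  this is why d2 has bidegree (0,-1).\<close>

lemma bideg_sq_of_xi:
  assumes v: "valid_mono n m" and j: "2*j \<in> snd m" "2*j < n"
  shows "qdeg n (sq_of_xi j m) = qdeg n m" "tdeg n (sq_of_xi j m) + 1 = tdeg n m"
proof -
  have jn: "j < n" using j(2) by simp
  have fS: "finite (snd m)" using v by (auto simp: valid_mono_def intro: finite_subset)
  have snd_eq: "snd (sq_of_xi j m) = snd m - {2*j}" by (simp add: sq_of_xi_def)
  have x: "(\<Sum>k<n. fst (sq_of_xi j m) k * w k) = (\<Sum>k<n. fst m k * w k) + 2 * w j"
    for w :: "nat \<Rightarrow> nat"
    unfolding sq_of_xi_def fst_conv by (rule sum_fun_upd_add[OF jn])
  show "qdeg n (sq_of_xi j m) = qdeg n m" "tdeg n (sq_of_xi j m) + 1 = tdeg n m"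
    unfolding qdeg_def tdeg_def snd_eq x[of "\<lambda>k. 2*k+2"] x[of "\<lambda>k. 2*k"]
      sum.remove[OF fS j(1), of "\<lambda>k. 2*k+4"] sum.remove[OF fS j(1), of "\<lambda>k. 2*k+1"]
    by simp_all
qed

lemma finite_basis_bideg: "finite (basis_bideg n a b)"
proof -
  let ?E = "{f. \<forall>x. (x \<in> {..<n} \<longrightarrow> f x \<in> {..a}) \<and> (x \<notin> {..<n} \<longrightarrow> f x = 0)}"
  have "fst m k \<le> a" if m: "m \<in> basis_bideg n a b" and "k < n" for m k
  proof -
    have "fst m k \<le> fst m k * (2*k+2)" by simp
    also have "\<dots> \<le> (\<Sum>k<n. fst m k * (2*k+2))" by (rule member_le_sum) (use that in auto)
    also have "\<dots> \<le> qdeg n m" by (simp add: qdeg_def)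
    finally show ?thesis using m by (simp add: basis_bideg_def)
  qed
  then have "basis_bideg n a b \<subseteq> ?E \<times> Pow {..<n}"
    by (auto simp: basis_bideg_def valid_mono_def)
  moreover have "finite (?E \<times> Pow {..<n})"
    by (intro finite_cartesian_product finite_set_of_finite_funs) auto
  ultimately show ?thesis by (rule finite_subset)
qed

section \<open>Linear algebra over Z/2\<close>

interpretation V: vector_space "fscale :: bit \<Rightarrow> (mono \<Rightarrow> bit) \<Rightarrow> mono \<Rightarrow> bit"
  by unfold_locales (rule ext; simp only: fscale_def plus_fun_apply distrib_left distrib_right
      mult.assoc mult_1_left)+

definition unit_vec :: "mono \<Rightarrow> mono \<Rightarrow> bit" where
  "unit_vec m = (\<lambda>m'. if m' = m then 1 else 0)"

lemma sum_fun_apply: "(\<Sum>i\<in>A. f i) x = (\<Sum>i\<in>A. f i x)"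
  by (induction A rule: infinite_finite_induct) auto

lemma linear_fscaleI:
  fixes f :: "(mono \<Rightarrow> bit) \<Rightarrow> mono \<Rightarrow> bit"
  assumes "\<And>x y. f (x + y) = f x + f y" "\<And>c x. f (fscale c x) = fscale c (f x)"
  shows "module_hom fscale fscale f"
  unfolding module_hom_iff using V.module_axioms assms by blast

lemma linear_dZ2: "module_hom fscale fscale (dZ2 n)"
  by (rule linear_fscaleI; rule ext)
    (simp_all only: dZ2_def plus_fun_apply sum.distrib fscale_def sum_distrib_left)

lemma linear_hZ2: "module_hom fscale fscale (hZ2 n)"
  by (rule linear_fscaleI; rule ext) (simp_all add: hZ2_def fscale_def)

lemma linear_projZ2: "module_hom fscale fscale (projZ2 n)"
  by (rule linear_fscaleI; rule ext) (simp_all add: projZ2_def fscale_def)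

lemma linear_add:
  "module_hom fscale fscale f \<Longrightarrow> module_hom fscale fscale g \<Longrightarrow>
    module_hom fscale fscale (\<lambda>x::mono \<Rightarrow> bit. f x + g x :: mono \<Rightarrow> bit)"
  unfolding module_hom_iff by (auto simp: fscale_def fun_eq_iff algebra_simps)

lemma inj_unit_vec: "inj unit_vec"
proof
  fix m m' assume "unit_vec m = unit_vec m'"
  then have "unit_vec m m = unit_vec m' m" by simp
  then show "m = m'" by (simp add: unit_vec_def split: if_splits)
qed

lemma in_span_unit_vec:
  assumes "finite X" "\<And>m. v m \<noteq> 0 \<Longrightarrow> m \<in> X"
  shows "v \<in> V.span (unit_vec ` X)"
proof -
  have v: "v = (\<Sum>m\<in>X. fscale (v m) (unit_vec m))"
  proof
    fix m'
    have "(\<Sum>m\<in>X. fscale (v m) (unit_vec m)) m' = (\<Sum>m\<in>X. if m = m' then v m' else 0)"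
      unfolding sum_fun_apply by (intro sum.cong refl) (simp add: fscale_def unit_vec_def)
    also have "\<dots> = (if m' \<in> X then v m' else 0)" using assms(1) by (simp add: sum.delta')
    also have "\<dots> = v m'" by (metis assms(2))
    finally show "v m' = (\<Sum>m\<in>X. fscale (v m) (unit_vec m)) m'" by simp
  qed
  show ?thesis by (subst v) (intro V.span_sum V.span_scale V.span_base imageI)
qed

lemma independent_unit_vec: "V.independent (unit_vec ` X)"
  unfolding V.independent_explicit_finite_subsets
proof (intro allI impI ballI)
  fix S u w
  assume S: "S \<subseteq> unit_vec ` X" and fS: "finite S"
    and s0: "(\<Sum>v\<in>S. fscale (u v) v) = 0" and w: "w \<in> S"
  obtain m where m: "w = unit_vec m" using S w by blast
  have "0 = (\<Sum>v\<in>S. fscale (u v) v) m" using s0 by simp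
  also have "\<dots> = (\<Sum>v\<in>S. if v = w then u v else 0)"
    unfolding sum_fun_apply
  proof (intro sum.cong refl)
    fix v assume "v \<in> S"
    then obtain m' where m': "v = unit_vec m'" using S by blast
    have "v = w \<longleftrightarrow> m' = m" unfolding m m' using inj_unit_vec by (auto dest: injD)
    then show "fscale (u v) v m = (if v = w then u v else 0)"
      by (auto simp: fscale_def m' unit_vec_def)
  qed
  also have "\<dots> = u w" using fS w by (simp add: sum.delta')
  finally show "u w = 0" by simp
qed

lemma independent_image_left_inverse:
  fixes f g :: "(mono \<Rightarrow> bit) \<Rightarrow> (mono \<Rightarrow> bit)"
  assumes f: "module_hom fscale fscale f" and g: "module_hom fscale fscale g"
    and gf: "\<And>x. x \<in> S \<Longrightarrow> g (f x) = x" and ind: "V.independent S"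
  shows "V.independent (f ` S)" "inj_on f S"
proof -
  have sub: "V.subspace {a. g (f a) = a}"
    by (rule V.subspaceI) (simp_all add: module_hom.add[OF f] module_hom.add[OF g]
        module_hom.scale[OF f] module_hom.scale[OF g] module_hom.zero[OF f] module_hom.zero[OF g])
  have "g (f x) = x" if "x \<in> V.span S" for x
    by (rule V.span_induct[OF that sub]) (simp add: gf)
  then have inj: "inj_on f (V.span S)" by (rule inj_on_inverseI[of _ g])
  show "V.independent (f ` S)" by (rule module_hom.independent_injective_image[OF f ind inj])
  show "inj_on f S" using inj V.span_superset by (rule inj_on_subset)
qed

lemma homotopy_formula_fun: "dZ2 n (hZ2 n v) + hZ2 n (dZ2 n v) + projZ2 n v = v"
  by (rule ext) (simp only: plus_fun_apply homotopy_formula)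

lemma dZ2_zero: "dZ2 n 0 = 0" by (rule ext) (simp add: dZ2_def)
lemma hZ2_zero: "hZ2 n 0 = 0" by (rule ext) (simp add: hZ2_def)
lemma dZ2_dZ2_fun: "dZ2 n (dZ2 n v) = 0" by (rule ext) (simp only: dZ2_dZ2 zero_fun_apply)
lemma projZ2_dZ2_fun: "projZ2 n (dZ2 n v) = 0" by (rule ext) (simp only: projZ2_dZ2 zero_fun_apply)
lemma dZ2_projZ2_fun: "dZ2 n (projZ2 n v) = 0" by (rule ext) (simp only: dZ2_projZ2 zero_fun_apply)

lemma sq_of_xi_pivot:
  assumes "pivot_xi n m"
  shows "\<not> pivot_xi n (sq_of_xi (pivot n m) m)" "\<not> critical n (sq_of_xi (pivot n m) m)"
proof -
  define j0 where "j0 = pivot n m"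
  have xi: "2*j0 \<in> snd m" and act: "active n m \<noteq> {}" using assms by (auto simp: pivot_xi_def j0_def)
  have A: "active n (sq_of_xi j0 m) = active n m" by (rule active_sq_of_xi[OF xi])
  have "pivot n (sq_of_xi j0 m) = j0" unfolding pivot_def A by (simp add: j0_def pivot_def)
  then show "\<not> pivot_xi n (sq_of_xi (pivot n m) m)"
    unfolding j0_def[symmetric] pivot_xi_def by (simp add: sq_of_xi_def)
  show "\<not> critical n (sq_of_xi (pivot n m) m)"
    unfolding j0_def[symmetric] critical_def A using act .
qed

lemma pivot_xi_not_critical: "pivot_xi n m \<Longrightarrow> \<not> critical n m"
  by (simp add: pivot_xi_def critical_def)

lemma hZ2_unit_vec:
  assumes "pivot_xi n u \<or> critical n u"
  shows "hZ2 n (unit_vec u) = 0"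
proof
  fix m
  show "hZ2 n (unit_vec u) m = 0 m"
    using sq_of_xi_pivot[of n m] assms by (auto simp: hZ2_def unit_vec_def)
qed

lemma projZ2_unit_vec_pivot_xi: "pivot_xi n u \<Longrightarrow> projZ2 n (unit_vec u) = 0"
  using pivot_xi_not_critical by (auto simp: projZ2_def unit_vec_def fun_eq_iff)

lemma projZ2_unit_vec_critical: "critical n c \<Longrightarrow> projZ2 n (unit_vec c) = unit_vec c"
  by (auto simp: projZ2_def unit_vec_def fun_eq_iff)

lemma dZ2_unit_vec_critical: "critical n c \<Longrightarrow> dZ2 n (unit_vec c) = 0"
  using dZ2_projZ2_fun[of n "unit_vec c"] by (simp only: projZ2_unit_vec_critical)

lemma hZ2_dZ2_unit_vec:
  assumes "pivot_xi n u"
  shows "hZ2 n (dZ2 n (unit_vec u)) = unit_vec u"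
  using homotopy_formula_fun[of n "unit_vec u"]
  by (simp only: hZ2_unit_vec[OF disjI1[OF assms]] projZ2_unit_vec_pivot_xi[OF assms] dZ2_zero
      add_0_left add_0_right)

lemma chains_support: "v \<in> chains n a b \<Longrightarrow> v m \<noteq> 0 \<Longrightarrow> m \<in> basis_bideg n a b"
  unfolding chains_def by blast

lemma d2_chains:
  assumes v: "v \<in> chains n a b"
  shows "d2 v = dZ2 n (v :: mono \<Rightarrow> bit)"
proof (rule d2_eq_dZ2)
  have "{m. v m \<noteq> 0} \<subseteq> basis_bideg n a b" using chains_support[OF v] by blast
  then show "finite {m. v m \<noteq> 0}" using finite_basis_bideg by (rule finite_subset)
  show "valid_mono n m" if "v m \<noteq> 0" for m
    using chains_support[OF v that] by (simp add: basis_bideg_def)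
qed

lemma unit_vec_chains: "m \<in> basis_bideg n a b \<Longrightarrow> unit_vec m \<in> chains n a b"
  by (simp add: chains_def unit_vec_def)

lemma dZ2_chains:
  assumes v: "v \<in> chains n a (Suc b)"
  shows "dZ2 n v \<in> chains n a b"
  unfolding chains_def mem_Collect_eq
proof (intro allI impI)
  fix m' assume "dZ2 n v m' \<noteq> 0"
  then obtain j where j: "j \<in> sq_slots n m'" "v (xi_of_sq j m') \<noteq> 0"
    unfolding dZ2_def by (meson sum.neutral)
  define p where "p = xi_of_sq j m'"
  have pB: "p \<in> basis_bideg n a (Suc b)" using chains_support[OF v j(2)] p_def by simp
  have j2: "2 \<le> fst m' j" "2*j \<notin> snd m'" "2*j < n" using j(1) by (auto simp: sq_slots_def)
  have m': "m' = sq_of_xi j p" unfolding p_def by (rule sq_of_xi_xi_of_sq[OF j2(1,2), symmetric])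
  have jp: "2*j \<in> snd p" by (simp add: p_def xi_of_sq_def)
  have vp: "valid_mono n p" using pB by (simp add: basis_bideg_def)
  show "m' \<in> basis_bideg n a b"
    using pB valid_mono_sq_of_xi[OF jp j2(3)] bideg_sq_of_xi[OF vp jp j2(3)]
    unfolding m' by (simp add: basis_bideg_def)
qed

text \<open>The bases on which the boundaries and the homology are concentrated.\<close>

definition pivot_xi_basis :: "nat \<Rightarrow> nat \<Rightarrow> nat \<Rightarrow> mono set" where
  "pivot_xi_basis n a b = {u \<in> basis_bideg n a b. pivot_xi n u}"

definition critical_basis :: "nat \<Rightarrow> nat \<Rightarrow> nat \<Rightarrow> mono set" where
  "critical_basis n a b = {c \<in> basis_bideg n a b. critical n c}"

lemma finite_pivot_xi_basis: "finite (pivot_xi_basis n a b)"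
  using finite_basis_bideg by (simp add: pivot_xi_basis_def)

lemma finite_critical_basis: "finite (critical_basis n a b)"
  using finite_basis_bideg by (simp add: critical_basis_def)

lemma hZ2_chains_span:
  assumes v: "v \<in> chains n a b"
  shows "hZ2 n v \<in> V.span (unit_vec ` pivot_xi_basis n a (Suc b))"
proof (rule in_span_unit_vec[OF finite_pivot_xi_basis])
  fix u assume h: "hZ2 n v u \<noteq> 0"
  define j0 where "j0 = pivot n u"
  have xi: "pivot_xi n u" using h by (simp add: hZ2_def split: if_splits)
  have pB: "sq_of_xi j0 u \<in> basis_bideg n a b"
    using h xi by (intro chains_support[OF v]) (simp add: hZ2_def j0_def)
  have jp: "2*j0 \<in> snd u" using xi by (simp add: pivot_xi_def j0_def)
  have j0n: "2*j0 < n" using pivot_in_active[of n u] xi by (auto simp: pivot_xi_def j0_def active_def)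
  have vu: "valid_mono n u" using valid_mono_sq_of_xi[OF jp j0n] pB by (simp add: basis_bideg_def)
  show "u \<in> pivot_xi_basis n a (Suc b)"
    using bideg_sq_of_xi[OF vu jp j0n] pB vu xi by (simp add: basis_bideg_def pivot_xi_basis_def)
qed

lemma projZ2_chains_span:
  assumes v: "v \<in> chains n a b"
  shows "projZ2 n v \<in> V.span (unit_vec ` critical_basis n a b)"
proof (rule in_span_unit_vec[OF finite_critical_basis])
  fix c assume "projZ2 n v c \<noteq> 0"
  then have "critical n c" "v c \<noteq> 0" by (simp_all add: projZ2_def split: if_splits)
  then show "c \<in> critical_basis n a b"
    using chains_support[OF v] unfolding critical_basis_def by blast
qed

section \<open>Homology dimension equals the number of critical monomials\<close>

lemma span_image_dZ2: "V.span (dZ2 n ` X) = dZ2 n ` V.span X"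
  by (rule module_hom.span_image[OF linear_dZ2])

lemma unit_vec_pivot_xi_basis_chains: "u \<in> pivot_xi_basis n a b \<Longrightarrow> unit_vec u \<in> chains n a b"
  by (intro unit_vec_chains) (simp add: pivot_xi_basis_def)

lemma card_unit_vec_image: "card (unit_vec ` X) = card X"
  by (rule card_image[OF inj_on_subset[OF inj_unit_vec subset_UNIV]])

text \<open>Every boundary is the boundary of a combination of monomials with xi at their pivot,
  since d w = d (h (d w)) by the homotopy formula.\<close>

lemma span_boundaries:
  "V.span (dZ2 n ` unit_vec ` pivot_xi_basis n a (Suc b)) = V.span (dZ2 n ` chains n a (Suc b))"
  unfolding V.span_eq
proof
  show "dZ2 n ` unit_vec ` pivot_xi_basis n a (Suc b) \<subseteq> V.span (dZ2 n ` chains n a (Suc b))"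
    using unit_vec_pivot_xi_basis_chains by (blast intro: V.span_base)
  show "dZ2 n ` chains n a (Suc b) \<subseteq> V.span (dZ2 n ` unit_vec ` pivot_xi_basis n a (Suc b))"
  proof
    fix x assume "x \<in> dZ2 n ` chains n a (Suc b)"
    then obtain w where w: "w \<in> chains n a (Suc b)" "x = dZ2 n w" by blast
    have "x = dZ2 n (hZ2 n (dZ2 n w))"
      using homotopy_formula_fun[of n "dZ2 n w"] unfolding w(2)
      by (simp only: dZ2_dZ2_fun projZ2_dZ2_fun hZ2_zero add_0_right)
    moreover have "hZ2 n (dZ2 n w) \<in> V.span (unit_vec ` pivot_xi_basis n a (Suc b))"
      by (rule hZ2_chains_span[OF dZ2_chains[OF w(1)]])
    ultimately show "x \<in> V.span (dZ2 n ` unit_vec ` pivot_xi_basis n a (Suc b))"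
      unfolding span_image_dZ2 by blast
  qed
qed

lemma dim_boundaries:
  "V.dim (dZ2 n ` chains n a (Suc b)) = card (pivot_xi_basis n a (Suc b))"
proof -
  let ?U = "pivot_xi_basis n a (Suc b)"
  have inv: "hZ2 n (dZ2 n x) = x" if "x \<in> unit_vec ` ?U" for x
    using that hZ2_dZ2_unit_vec by (auto simp: pivot_xi_basis_def)
  note li = independent_image_left_inverse[OF linear_dZ2 linear_hZ2 inv independent_unit_vec]
  have "V.dim (dZ2 n ` chains n a (Suc b)) = card (dZ2 n ` unit_vec ` ?U)"
    using V.dim_eq_card[OF span_boundaries li(1)] by simp
  also have "\<dots> = card ?U" using card_image[OF li(2)] card_unit_vec_image by simp
  finally show ?thesis .
qed

text \<open>A cycle v equals d (h v) + p v; so the cycles are spanned by the boundaries of the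
  monomials with xi at their pivot together with the critical monomials.\<close>

lemma span_cycles:
  "V.span (dZ2 n ` unit_vec ` pivot_xi_basis n a (Suc b) \<union> unit_vec ` critical_basis n a b)
   = V.span {v \<in> chains n a b. dZ2 n v = 0}"
  (is "V.span (?B \<union> ?K) = V.span ?Z")
  unfolding V.span_eq
proof
  have "?B \<subseteq> ?Z" using dZ2_chains unit_vec_pivot_xi_basis_chains dZ2_dZ2_fun by blast
  moreover have "?K \<subseteq> ?Z"
    using unit_vec_chains dZ2_unit_vec_critical by (auto simp: critical_basis_def)
  ultimately show "?B \<union> ?K \<subseteq> V.span ?Z" by (blast intro: V.span_base)
  show "?Z \<subseteq> V.span (?B \<union> ?K)"
  proof
    fix v assume "v \<in> ?Z"
    then have v: "v \<in> chains n a b" "dZ2 n v = 0" by auto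
    have ve: "v = dZ2 n (hZ2 n v) + projZ2 n v"
      using homotopy_formula_fun[of n v] unfolding v(2) by (simp only: hZ2_zero add_0_right)
    have "dZ2 n (hZ2 n v) \<in> V.span ?B"
      using hZ2_chains_span[OF v(1)] unfolding span_image_dZ2 by blast
    moreover have "projZ2 n v \<in> V.span ?K" by (rule projZ2_chains_span[OF v(1)])
    ultimately show "v \<in> V.span (?B \<union> ?K)"
      by (subst ve) (intro V.span_add; blast intro: V.span_mono[THEN subsetD])
  qed
qed

text \<open>Independence of this spanning set: it is the image of the unit vectors under
  d + p, which has the left inverse h + p on them.\<close>

lemma dim_cycles:
  "V.dim {v \<in> chains n a b. dZ2 n v = 0}
   = card (pivot_xi_basis n a (Suc b)) + card (critical_basis n a b)"
proof -
  let ?U = "pivot_xi_basis n a (Suc b)" and ?K = "critical_basis n a b"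
  define phi where "phi v = dZ2 n v + projZ2 n v" for v
  define psi where "psi v = hZ2 n v + projZ2 n v" for v
  have phi_U: "phi (unit_vec u) = dZ2 n (unit_vec u)" if "u \<in> ?U" for u
    using that by (simp add: phi_def pivot_xi_basis_def projZ2_unit_vec_pivot_xi)
  have phi_K: "phi (unit_vec c) = unit_vec c" if "c \<in> ?K" for c
    using that by (simp add: phi_def critical_basis_def projZ2_unit_vec_critical dZ2_unit_vec_critical)
  have inv: "psi (phi x) = x" if "x \<in> unit_vec ` (?U \<union> ?K)" for x
  proof -
    from that obtain m where m: "m \<in> ?U \<union> ?K" "x = unit_vec m" by blast
    then consider "m \<in> ?U" "pivot_xi n m" | "m \<in> ?K" "critical n m"
      by (auto simp: pivot_xi_basis_def critical_basis_def)
    then show ?thesis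
      by cases (simp_all add: m(2) phi_U phi_K psi_def hZ2_dZ2_unit_vec projZ2_dZ2_fun
          hZ2_unit_vec projZ2_unit_vec_critical)
  qed
  have UK: "?U \<inter> ?K = {}"
    using pivot_xi_not_critical by (auto simp: pivot_xi_basis_def critical_basis_def)
  have img: "phi ` unit_vec ` (?U \<union> ?K) = dZ2 n ` unit_vec ` ?U \<union> unit_vec ` ?K"
    by (force simp: image_Un phi_U phi_K image_iff)
  note li = independent_image_left_inverse[OF linear_add[OF linear_dZ2 linear_projZ2]
      linear_add[OF linear_hZ2 linear_projZ2] inv[unfolded phi_def psi_def] independent_unit_vec,
      folded phi_def]
  have "V.dim {v \<in> chains n a b. dZ2 n v = 0} = card (phi ` unit_vec ` (?U \<union> ?K))"
    using V.dim_eq_card[OF span_cycles[of n a b, folded img] li(1)] by simp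
  also have "\<dots> = card (?U \<union> ?K)" using card_image[OF li(2)] card_unit_vec_image by simp
  also have "\<dots> = card ?U + card ?K"
    using UK by (intro card_Un_disjoint finite_pivot_xi_basis finite_critical_basis)
  finally show ?thesis .
qed

theorem kh_dim_eq_card_critical:
  "kh_dim TYPE(bit) n a b = card (critical_basis n a b)"
proof -
  have "{v \<in> chains n a b. d2 v = (\<lambda>_. 0)} = {v \<in> chains n a b. dZ2 n v = (0 :: mono \<Rightarrow> bit)}"
    using d2_chains by (auto simp: zero_fun_def)
  moreover have "d2 ` chains n a (b+1) = dZ2 n ` (chains n a (Suc b) :: (mono \<Rightarrow> bit) set)"
    using d2_chains by (auto simp: image_iff)
  ultimately show ?thesis by (simp add: kh_dim_def dim_cycles dim_boundaries)
qed

section \<open>Bigraded generating series\<close>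

unbundle fps_syntax

text \<open>It is well behaved when all
  fibres of d are finite.\<close>

definition gen_series :: "'x set \<Rightarrow> ('x \<Rightarrow> nat \<times> nat) \<Rightarrow> rat fps fps" where
  "gen_series A d = Abs_fps (\<lambda>a. Abs_fps (\<lambda>b. of_nat (card {x\<in>A. d x = (a,b)})))"

definition finite_fibres :: "'x set \<Rightarrow> ('x \<Rightarrow> nat \<times> nat) \<Rightarrow> bool" where
  "finite_fibres A d \<longleftrightarrow> (\<forall>p. finite {x\<in>A. d x = p})"

definition add_bideg :: "nat \<times> nat \<Rightarrow> nat \<times> nat \<Rightarrow> nat \<times> nat" where
  "add_bideg p p' = (fst p + fst p', snd p + snd p')"

lemma gen_series_nth: "gen_series A d $ a $ b = of_nat (card {x\<in>A. d x = (a,b)})"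
  by (simp add: gen_series_def)

lemma fps_fps_eqI: "(\<And>a b. F $ a $ b = H $ a $ b) \<Longrightarrow> F = (H :: rat fps fps)"
  by (intro fps_ext) auto

lemma gen_series_bij:
  assumes f: "bij_betw f A B" and d: "\<And>x. x \<in> A \<Longrightarrow> dB (f x) = dA x"
  shows "gen_series A dA = gen_series B dB"
proof (rule fps_fps_eqI)
  fix a b
  have "bij_betw f {x\<in>A. dA x = (a,b)} {y\<in>B. dB y = (a,b)}"
    using f d unfolding bij_betw_def by (auto intro: inj_on_subset simp: image_iff)
  then show "gen_series A dA $ a $ b = gen_series B dB $ a $ b"
    by (simp add: gen_series_nth bij_betw_same_card)
qed

lemma fibre_product:
  "{z \<in> A \<times> B. add_bideg (dA (fst z)) (dB (snd z)) = (a,b)} =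
   (\<Union>p\<in>{0..a}\<times>{0..b}. {x\<in>A. dA x = p} \<times> {y\<in>B. dB y = (a - fst p, b - snd p)})"
proof (intro equalityI subsetI)
  fix z assume z: "z \<in> {z \<in> A \<times> B. add_bideg (dA (fst z)) (dB (snd z)) = (a,b)}"
  obtain x y where xy: "z = (x,y)" by (cases z)
  obtain i j where ij: "dA x = (i,j)" by (cases "dA x")
  obtain k l where kl: "dB y = (k,l)" by (cases "dB y")
  have "i + k = a" "j + l = b" using z xy ij kl by (auto simp: add_bideg_def)
  then show "z \<in> (\<Union>p\<in>{0..a}\<times>{0..b}. {x\<in>A. dA x = p} \<times> {y\<in>B. dB y = (a - fst p, b - snd p)})"
    using z xy ij kl by (auto intro!: bexI[of _ "(i,j)"])
next
  fix z assume "z \<in> (\<Union>p\<in>{0..a}\<times>{0..b}. {x\<in>A. dA x = p} \<times> {y\<in>B. dB y = (a - fst p, b - snd p)})"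
  then obtain i j where ij: "i \<le> a" "j \<le> b" "z \<in> {x\<in>A. dA x = (i,j)} \<times> {y\<in>B. dB y = (a - i, b - j)}"
    by auto
  then show "z \<in> {z \<in> A \<times> B. add_bideg (dA (fst z)) (dB (snd z)) = (a,b)}"
    by (auto simp: add_bideg_def)
qed


lemma finite_fibres_product:
  assumes "finite_fibres A dA" "finite_fibres B dB"
  shows "finite_fibres (A \<times> B) (\<lambda>z. add_bideg (dA (fst z)) (dB (snd z)))"
  unfolding finite_fibres_def
proof
  fix p :: "nat \<times> nat"
  obtain a b where p: "p = (a,b)" by (cases p)
  show "finite {z \<in> A \<times> B. add_bideg (dA (fst z)) (dB (snd z)) = p}"
    unfolding p fibre_product using assms by (auto simp: finite_fibres_def)
qed

lemma gen_series_product: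
  assumes "finite_fibres A dA" "finite_fibres B dB"
  shows "gen_series (A \<times> B) (\<lambda>z. add_bideg (dA (fst z)) (dB (snd z))) = gen_series A dA * gen_series B dB"
proof (rule fps_fps_eqI)
  fix a b
  define FA where "FA p = {x\<in>A. dA x = p}" for p
  define FB where "FB p = {y\<in>B. dB y = p}" for p
  have finA: "finite (FA p)" for p using assms(1) unfolding finite_fibres_def FA_def by (rule spec)
  have finB: "finite (FB p)" for p using assms(2) unfolding finite_fibres_def FB_def by (rule spec)
  have "card {z \<in> A \<times> B. add_bideg (dA (fst z)) (dB (snd z)) = (a,b)}
      = (\<Sum>p\<in>{0..a}\<times>{0..b}. card (FA p \<times> FB (a - fst p, b - snd p)))"
    unfolding fibre_product FA_def[symmetric] FB_def[symmetric]
    by (rule card_UN_disjoint) (simp_all add: finA finB, auto simp: FA_def)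
  also have "\<dots> = (\<Sum>i=0..a. \<Sum>j=0..b. card (FA (i,j)) * card (FB (a - i, b - j)))"
    by (simp add: card_cartesian_product sum.cartesian_product split_def)
  finally have c: "card {z \<in> A \<times> B. add_bideg (dA (fst z)) (dB (snd z)) = (a,b)}
      = (\<Sum>i=0..a. \<Sum>j=0..b. card (FA (i,j)) * card (FB (a - i, b - j)))" .
  have "(gen_series A dA * gen_series B dB) $ a $ b
      = (\<Sum>i=0..a. \<Sum>j=0..b. of_nat (card (FA (i,j))) * of_nat (card (FB (a - i, b - j))))"
    by (simp add: fps_mult_nth fps_sum_nth gen_series_nth FA_def FB_def)
  then show "gen_series (A \<times> B) (\<lambda>z. add_bideg (dA (fst z)) (dB (snd z))) $ a $ b
      = (gen_series A dA * gen_series B dB) $ a $ b"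
    unfolding gen_series_nth c by simp
qed

lemma monomial_nth: "(qvar ^ p * tvar ^ r) $ a $ b = (if a = p \<and> b = r then 1 else 0)"
  by (simp add: fps_X_power_mult_nth)

lemma gen_series_singleton:
  assumes "A = {x0}" "d x0 = (0,0)"
  shows "gen_series A d = 1"
proof (rule fps_fps_eqI)
  fix a b
  have "{x\<in>A. d x = (a,b)} = (if a = 0 \<and> b = 0 then {x0} else {})" using assms by auto
  then show "gen_series A d $ a $ b = (1::rat fps fps) $ a $ b" by (simp add: gen_series_nth)
qed

lemma gen_series_doubleton:
  assumes "A = {x0, x1}" "x0 \<noteq> x1" "d x0 = (0,0)" "d x1 = (p,r)" "p > 0"
  shows "gen_series A d = 1 + qvar ^ p * tvar ^ r"
proof (rule fps_fps_eqI)
  fix a b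
  have "{x\<in>A. d x = (a,b)} = (if a = 0 \<and> b = 0 then {x0} else {}) \<union> (if a = p \<and> b = r then {x1} else {})"
    using assms by auto
  moreover have "\<not> (a = 0 \<and> b = 0 \<and> a = p \<and> b = r)" using assms(5) by auto
  ultimately show "gen_series A d $ a $ b = (1 + qvar ^ p * tvar ^ r) $ a $ b"
    unfolding gen_series_nth fps_add_nth monomial_nth using assms(2) by auto
qed

text \<open>A bivariate series with constant term 1 is invertible; \<open>rat fps\<close> is not a field, so the
  library lemmas for division rings do not apply directly.\<close>

lemma fps_fps_mult_inverse:
  fixes f :: "rat fps fps"
  assumes "f $ 0 = 1"
  shows "f * inverse f = 1"
proof -
  have "inverse f = fps_right_inverse f (inverse (f $ 0))" by (rule fps_inverse_def)
  also have "inverse (f $ 0) = (1::rat fps)" by (simp only: assms fps_inverse_one)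
  finally show ?thesis by (simp add: fps_right_inverse assms)
qed

lemma monomial_nth_0: "p > 0 \<Longrightarrow> (qvar ^ p * tvar ^ r) $ 0 = 0"
  by (rule fps_ext) (simp add: monomial_nth)

lemma one_minus_monomial_inverse: "p > 0 \<Longrightarrow> (1 - qvar ^ p * tvar ^ r) * inverse (1 - qvar ^ p * tvar ^ r) = 1"
  by (rule fps_fps_mult_inverse) (simp add: monomial_nth_0)

lemma one_plus_monomial_inverse: "p > 0 \<Longrightarrow> (1 + qvar ^ p * tvar ^ r) * inverse (1 + qvar ^ p * tvar ^ r) = 1"
  by (rule fps_fps_mult_inverse) (simp add: monomial_nth_0)

lemma gen_series_multiples:
  assumes p: "p > 0"
  shows "gen_series (UNIV :: nat set) (\<lambda>e. (e * p, e * r)) = inverse (1 - qvar ^ p * tvar ^ r)"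
proof -
  define g where "g = gen_series (UNIV :: nat set) (\<lambda>e. (e * p, e * r))"
  define M where "M = qvar ^ p * tvar ^ r"
  define c where "c a b \<longleftrightarrow> (\<exists>e. a = e * p \<and> b = e * r)" for a b
  have g_nth: "g $ a $ b = (if c a b then 1 else 0)" for a b
  proof -
    have "{x. x * p = a \<and> x * r = b} = (if c a b then {a div p} else {})"
      using p by (auto simp: c_def)
    then show ?thesis by (simp add: g_def gen_series_nth)
  qed
  have c_rec: "c a b \<longleftrightarrow> (a = 0 \<and> b = 0) \<or> (p \<le> a \<and> r \<le> b \<and> c (a - p) (b - r))" for a b
  proof
    assume "c a b"
    then obtain e where e: "a = e * p" "b = e * r" by (auto simp: c_def)
    then show "(a = 0 \<and> b = 0) \<or> (p \<le> a \<and> r \<le> b \<and> c (a - p) (b - r))"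
      by (cases e) (auto simp: c_def)
  next
    assume "(a = 0 \<and> b = 0) \<or> (p \<le> a \<and> r \<le> b \<and> c (a - p) (b - r))"
    then show "c a b"
    proof
      assume h: "p \<le> a \<and> r \<le> b \<and> c (a - p) (b - r)"
      then obtain e where e: "a - p = e * p" "b - r = e * r" by (auto simp: c_def)
      have "a = e * p + p" "b = e * r + r" using h e by linarith+
      then have "a = Suc e * p" "b = Suc e * r" by simp_all
      then show "c a b" unfolding c_def by blast
    qed (auto simp: c_def intro: exI[of _ 0])
  qed
  have left: "(1 - M) * g = 1"
  proof (rule fps_fps_eqI)
    fix a b
    have "(M * g) $ a $ b = (if p \<le> a \<and> r \<le> b then g $ (a - p) $ (b - r) else 0)"
      by (simp add: M_def mult.assoc fps_X_power_mult_nth)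
    then show "((1 - M) * g) $ a $ b = (1::rat fps fps) $ a $ b"
      using c_rec[of a b] p by (auto simp: left_diff_distrib g_nth)
  qed
  have right: "(1 - M) * inverse (1 - M) = 1"
    unfolding M_def by (rule one_minus_monomial_inverse[OF p])
  have "g = g * ((1 - M) * inverse (1 - M))" by (simp only: right mult_1_right)
  also have "\<dots> = ((1 - M) * g) * inverse (1 - M)" by (simp only: ac_simps)
  also have "\<dots> = inverse (1 - M)" by (simp only: left mult_1_left)
  finally show ?thesis by (simp only: g_def M_def)
qed

section \<open>Monomials with prescribed exponents factor over the generators\<close>

definition monos_with :: "nat \<Rightarrow> (nat \<Rightarrow> nat set) \<Rightarrow> (nat \<Rightarrow> bool) \<Rightarrow> mono set" where
  "monos_with N P Q = {m. valid_mono N m \<and> (\<forall>k<N. fst m k \<in> P k) \<and> (\<forall>k\<in>snd m. Q k)}"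

definition bideg :: "nat \<Rightarrow> mono \<Rightarrow> nat \<times> nat" where
  "bideg N m = (qdeg N m, tdeg N m)"

definition x_bideg :: "nat \<Rightarrow> nat \<Rightarrow> nat \<times> nat" where
  "x_bideg k e = (e * (2*k+2), e * (2*k))"

definition xi_bideg :: "nat \<Rightarrow> bool \<Rightarrow> nat \<times> nat" where
  "xi_bideg k s = (if s then (2*k+4, 2*k+1) else (0,0))"

definition xi_choices :: "bool \<Rightarrow> bool set" where
  "xi_choices q = {s. s \<longrightarrow> q}"

lemma finite_fibres_monos_with: "finite_fibres (monos_with N P Q) (bideg N)"
  unfolding finite_fibres_def
proof
  fix p :: "nat \<times> nat"
  have "{x \<in> monos_with N P Q. bideg N x = p} \<subseteq> basis_bideg N (fst p) (snd p)"
    by (auto simp: monos_with_def bideg_def basis_bideg_def)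
  then show "finite {x \<in> monos_with N P Q. bideg N x = p}"
    using finite_basis_bideg by (rule finite_subset)
qed

lemma finite_fibres_x_bideg: "finite_fibres A (x_bideg k)"
  unfolding finite_fibres_def
proof
  fix p :: "nat \<times> nat"
  have "{x \<in> A. x_bideg k x = p} \<subseteq> {..fst p}"
  proof
    fix x assume "x \<in> {x \<in> A. x_bideg k x = p}"
    then have "x * (2*k+2) = fst p" by (auto simp: x_bideg_def)
    moreover have "x \<le> x * (2*k+2)" by simp
    ultimately show "x \<in> {..fst p}" by simp
  qed
  then show "finite {x \<in> A. x_bideg k x = p}" by (rule finite_subset) simp
qed

lemma finite_fibres_bool: "finite_fibres (A :: bool set) d"
  unfolding finite_fibres_def by simp

lemma bideg_split_last:
  assumes m: "valid_mono (Suc N) m"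
  shows "bideg (Suc N) m = add_bideg (bideg N ((fst m)(N := 0), snd m - {N}))
           (add_bideg (x_bideg N (fst m N)) (xi_bideg N (N \<in> snd m)))"
proof -
  have fS: "finite (snd m)" using m by (auto simp: valid_mono_def intro: finite_subset[of _ "{..<Suc N}"])
  have x: "(\<Sum>k<N. ((fst m)(N := 0)) k * w k) = (\<Sum>k<N. fst m k * w k)" for w :: "nat \<Rightarrow> nat"
    by (rule sum.cong) auto
  have xi: "(\<Sum>k\<in>snd m. h k) = (\<Sum>k\<in>snd m - {N}. h k) + (if N \<in> snd m then h N else 0)"
    for h :: "nat \<Rightarrow> nat"
    using sum.remove[OF fS, of N h] by auto
  show ?thesis
    unfolding bideg_def qdeg_def tdeg_def add_bideg_def x_bideg_def xi_bideg_def fst_conv snd_conv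
      x sum.lessThan_Suc xi
    by (simp add: algebra_simps)
qed

lemma bij_monos_with_Suc:
  "bij_betw (\<lambda>m. (((fst m)(N := 0), snd m - {N}), (fst m N, N \<in> snd m)))
     (monos_with (Suc N) P Q) (monos_with N P Q \<times> (P N \<times> xi_choices (Q N)))"
proof (rule bij_betw_byWitness[where f'="\<lambda>((e,S),(x,s)). (e(N := x), if s then insert N S else S)"])
  show "\<forall>m\<in>monos_with (Suc N) P Q.
      (\<lambda>((e,S),(x,s)). (e(N := x), if s then insert N S else S))
        (((fst m)(N := 0), snd m - {N}), (fst m N, N \<in> snd m)) = m"
    by (auto simp: fun_eq_iff)
  show "\<forall>z\<in>monos_with N P Q \<times> (P N \<times> xi_choices (Q N)).
      (\<lambda>m. (((fst m)(N := 0), snd m - {N}), (fst m N, N \<in> snd m)))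
        ((\<lambda>((e,S),(x,s)). (e(N := x), if s then insert N S else S)) z) = z"
    by (auto simp: monos_with_def valid_mono_def fun_eq_iff)
  show "(\<lambda>m. (((fst m)(N := 0), snd m - {N}), (fst m N, N \<in> snd m))) ` monos_with (Suc N) P Q
      \<subseteq> monos_with N P Q \<times> (P N \<times> xi_choices (Q N))"
    by (auto simp: monos_with_def valid_mono_def xi_choices_def)
  show "(\<lambda>((e,S),(x,s)). (e(N := x), if s then insert N S else S)) `
      (monos_with N P Q \<times> (P N \<times> xi_choices (Q N))) \<subseteq> monos_with (Suc N) P Q"
    by (auto simp: monos_with_def valid_mono_def xi_choices_def less_Suc_eq split: if_splits)
qed

lemma gen_series_monos_with_Suc:
  "gen_series (monos_with (Suc N) P Q) (bideg (Suc N)) =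
     gen_series (monos_with N P Q) (bideg N) *
     (gen_series (P N) (x_bideg N) * gen_series (xi_choices (Q N)) (xi_bideg N))"
proof -
  have "gen_series (monos_with (Suc N) P Q) (bideg (Suc N)) =
      gen_series (monos_with N P Q \<times> (P N \<times> xi_choices (Q N)))
        (\<lambda>z. add_bideg (bideg N (fst z)) (add_bideg (x_bideg N (fst (snd z))) (xi_bideg N (snd (snd z)))))"
    by (rule gen_series_bij[OF bij_monos_with_Suc])
      (simp add: bideg_split_last monos_with_def)
  also have "\<dots> = gen_series (monos_with N P Q) (bideg N) *
      gen_series (P N \<times> xi_choices (Q N)) (\<lambda>w. add_bideg (x_bideg N (fst w)) (xi_bideg N (snd w)))"
    using gen_series_product[OF finite_fibres_monos_with
        finite_fibres_product[OF finite_fibres_x_bideg finite_fibres_bool]] by simp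
  also have "gen_series (P N \<times> xi_choices (Q N)) (\<lambda>w. add_bideg (x_bideg N (fst w)) (xi_bideg N (snd w)))
      = gen_series (P N) (x_bideg N) * gen_series (xi_choices (Q N)) (xi_bideg N)"
    by (rule gen_series_product[OF finite_fibres_x_bideg finite_fibres_bool])
  finally show ?thesis .
qed

lemma gen_series_monos_with:
  "gen_series (monos_with N P Q) (bideg N) =
     (\<Prod>k<N. gen_series (P k) (x_bideg k) * gen_series (xi_choices (Q k)) (xi_bideg k))"
proof (induction N)
  case 0
  have "monos_with 0 P Q = {(\<lambda>_. 0, {})}"
    by (auto simp: monos_with_def valid_mono_def fun_eq_iff)
  moreover have "bideg 0 (\<lambda>_. 0, {}) = (0,0)" by (simp add: bideg_def qdeg_def tdeg_def)
  ultimately show ?case by (simp add: gen_series_singleton)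
next
  case (Suc N)
  then show ?case by (simp add: gen_series_monos_with_Suc)
qed

section \<open>The generating series of critical monomials\<close>

abbreviation x_mon :: "nat \<Rightarrow> rat fps fps" where "x_mon k \<equiv> qvar ^ (2*k+2) * tvar ^ (2*k)"
abbreviation xi_mon :: "nat \<Rightarrow> rat fps fps" where "xi_mon k \<equiv> qvar ^ (2*k+4) * tvar ^ (2*k+1)"

definition critical_exps :: "nat \<Rightarrow> nat \<Rightarrow> nat set" where
  "critical_exps n k = (if 2*k < n then {..1} else UNIV)"

lemma critical_iff_monos_with:
  assumes v: "valid_mono n m"
  shows "critical n m \<longleftrightarrow> m \<in> monos_with n (critical_exps n) odd"
proof
  assume "critical n m"
  then have c: "\<And>j. 2*j < n \<Longrightarrow> 2*j \<notin> snd m \<and> fst m j < 2"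
    by (auto simp: critical_def active_def)
  have "fst m k \<in> critical_exps n k" if "k < n" for k
    using c[of k] by (cases "2*k < n") (auto simp: critical_exps_def)
  moreover have "odd k" if "k \<in> snd m" for k
    using c[of "k div 2"] v that by (auto simp: valid_mono_def)
  ultimately show "m \<in> monos_with n (critical_exps n) odd" using v by (simp add: monos_with_def)
next
  assume "m \<in> monos_with n (critical_exps n) odd"
  then have exps: "\<forall>k<n. fst m k \<in> critical_exps n k" and xis: "\<forall>k\<in>snd m. odd k"
    by (simp_all add: monos_with_def)
  have "fst m j \<le> 1 \<and> 2*j \<notin> snd m" if "2*j < n" for j
    using that exps[rule_format, of j] xis by (auto simp: critical_exps_def)
  then show "critical n m" by (force simp: critical_def active_def)
qed

theorem poincare_eq_gen_series:
  "poincare TYPE(bit) n = gen_series (monos_with n (critical_exps n) odd) (bideg n)"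
proof (rule fps_fps_eqI)
  fix a b
  have "critical_basis n a b = {x \<in> monos_with n (critical_exps n) odd. bideg n x = (a,b)}"
    using critical_iff_monos_with
    by (auto simp: critical_basis_def basis_bideg_def monos_with_def bideg_def)
  then show "poincare TYPE(bit) n $ a $ b = gen_series (monos_with n (critical_exps n) odd) (bideg n) $ a $ b"
    by (simp add: poincare_def kh_dim_eq_card_critical gen_series_nth)
qed

lemma gen_series_critical_exps:
  "gen_series (critical_exps n k) (x_bideg k) = (if 2*k < n then 1 + x_mon k else inverse (1 - x_mon k))"
proof (cases "2*k < n")
  case True
  have "gen_series {0, 1::nat} (x_bideg k) = 1 + x_mon k"
    by (rule gen_series_doubleton) (auto simp: x_bideg_def)
  moreover have "{..1::nat} = {0,1}" by auto
  ultimately show ?thesis using True by (simp add: critical_exps_def)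
next
  case False
  have "gen_series (UNIV::nat set) (x_bideg k) = inverse (1 - x_mon k)"
    unfolding x_bideg_def[abs_def] by (rule gen_series_multiples) simp
  then show ?thesis using False by (simp add: critical_exps_def)
qed

lemma gen_series_xi_choices:
  "gen_series (xi_choices q) (xi_bideg k) = (if q then 1 + xi_mon k else 1)"
proof (cases q)
  case True
  then have "xi_choices q = {False, True}" by (auto simp: xi_choices_def)
  then show ?thesis
    using True by (simp add: gen_series_doubleton[of _ False True _ "2*k+4" "2*k+1"] xi_bideg_def)
next
  case False
  then have "xi_choices q = {False}" by (auto simp: xi_choices_def)
  then show ?thesis using False by (simp add: gen_series_singleton xi_bideg_def)
qed

lemma poincare_local_factors:
  "poincare TYPE(bit) n =
     (\<Prod>k<n. (if 2*k < n then 1 + x_mon k else inverse (1 - x_mon k)) * (if odd k then 1 + xi_mon k else 1))"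
  unfolding poincare_eq_gen_series gen_series_monos_with gen_series_critical_exps gen_series_xi_choices ..

section \<open>Rearranging into the closed form\<close>

lemma local_factor_eq:
  "(if 2*k < n then 1 + x_mon k else inverse (1 - x_mon k)) * (if odd k then 1 + xi_mon k else 1)
   = ((1 + xi_mon k) * inverse (1 - x_mon k)) *
     ((if 2*k < n then 1 - x_mon k * x_mon k else 1) * (if even k then inverse (1 + xi_mon k) else 1))"
proof -
  define x where "x = x_mon k"
  define s where "s = xi_mon k"
  define I where "I = inverse (1 - x)"
  define J where "J = inverse (1 + s)"
  have inv_x: "(1 - x) * I = 1" unfolding x_def I_def by (rule one_minus_monomial_inverse) simp
  have inv_s: "(1 + s) * J = 1" unfolding s_def J_def by (rule one_plus_monomial_inverse) simp
  have sq: "1 - x * x = (1 - x) * (1 + x)" by (simp add: algebra_simps)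
  have both: "((1 + s) * I) * ((1 - x * x) * J) = 1 + x"
  proof -
    have "((1 + s) * I) * ((1 - x * x) * J) = ((1 + s) * J) * ((1 - x) * I) * (1 + x)"
      by (simp only: sq ac_simps)
    then show ?thesis by (simp only: inv_x inv_s mult_1_left)
  qed
  have num: "((1 + s) * I) * (1 - x * x) = (1 + x) * (1 + s)"
  proof -
    have "((1 + s) * I) * (1 - x * x) = ((1 - x) * I) * (1 + x) * (1 + s)"
      by (simp only: sq ac_simps)
    then show ?thesis by (simp only: inv_x mult_1_left)
  qed
  have den: "((1 + s) * I) * J = I"
  proof -
    have "((1 + s) * I) * J = ((1 + s) * J) * I" by (simp only: ac_simps)
    then show ?thesis by (simp only: inv_s mult_1_left)
  qed
  have "(if 2*k < n then 1 + x else I) * (if odd k then 1 + s else 1)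
      = ((1 + s) * I) * ((if 2*k < n then 1 - x * x else 1) * (if even k then J else 1))"
    by (cases "2*k < n"; cases "even k")
      (simp_all only: if_True if_False not_True_eq_False not_False_eq_True both num den
        mult_1_left mult_1_right, rule mult.commute)
  then show ?thesis by (simp only: x_def s_def I_def J_def)
qed

text \<open>The correction product over i \<le> (n-1)/2 of the closed form, rewritten as a product over
  all k < n: the numerators belong to the pairs k = i (2k < n), the denominators to the odd
  generators xi_(2i).\<close>

lemma correction_product_reindex:
  assumes "n \<ge> 1"
  shows "(\<Prod>i\<in>{0..(n-1) div 2}. (1 - qvar ^ (4*i+4) * tvar ^ (4*i)) * inverse (1 + qvar ^ (4*i+4) * tvar ^ (4*i+1)))
    = (\<Prod>k<n. (if 2*k < n then 1 - x_mon k * x_mon k else 1) * (if even k then inverse (1 + xi_mon k) else 1))"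
proof -
  define I where "I = {0..(n-1) div 2}"
  have I_eq: "I = {k \<in> {..<n}. 2*k < n}" using assms by (auto simp: I_def)
  have double_I: "(\<lambda>i. 2*i) ` I = {k \<in> {..<n}. even k}"
    unfolding I_eq by (auto elim!: evenE)
  have x_sq: "x_mon i * x_mon i = qvar ^ (4*i+4) * tvar ^ (4*i)" for i
  proof -
    have "4*i+4 = (2*i+2)+(2*i+2)" "4*i = 2*i+2*i" by simp_all
    then show ?thesis by (simp only: power_add ac_simps)
  qed
  have xi_double: "xi_mon (2*i) = qvar ^ (4*i+4) * tvar ^ (4*i+1)" for i
    by (simp add: mult_ac)
  have num: "(\<Prod>i\<in>I. 1 - qvar ^ (4*i+4) * tvar ^ (4*i)) = (\<Prod>k<n. if 2*k < n then 1 - x_mon k * x_mon k else 1)"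
    unfolding I_eq x_sq by (rule prod.inter_filter) simp
  have "(\<Prod>i\<in>I. inverse (1 + qvar ^ (4*i+4) * tvar ^ (4*i+1))) = (\<Prod>k\<in>(\<lambda>i. 2*i) ` I. inverse (1 + xi_mon k))"
    unfolding xi_double[symmetric] by (rule prod.reindex[symmetric, unfolded comp_def]) (auto simp: inj_on_def)
  also have "\<dots> = (\<Prod>k<n. if even k then inverse (1 + xi_mon k) else 1)"
    unfolding double_I by (rule prod.inter_filter) simp
  finally show ?thesis unfolding I_def[symmetric] prod.distrib num by simp
qed

theorem mainTheorem1:
  fixes n :: nat
  assumes "n \<ge> 1"
  shows "poincare TYPE(bit) n =
    (\<Prod>i<n. (1 + qvar ^ (2*i+4) * tvar ^ (2*i+1)) * inverse (1 - qvar ^ (2*i+2) * tvar ^ (2*i)))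
  * (\<Prod>i\<in>{0..(n-1) div 2}. (1 - qvar ^ (4*i+4) * tvar ^ (4*i)) * inverse (1 + qvar ^ (4*i+4) * tvar ^ (4*i+1)))"
  unfolding correction_product_reindex[OF assms] prod.distrib[symmetric] poincare_local_factors
    local_factor_eq ..

end
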